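(* Let $G$ be a finitely generated discrete group and let $K$ be a finite subset of $G$. Let $I$ be the two-sided ideal of the group ring $\mathbb{C}G$ generated by $\chi_K$. Then $K$ is an $\mathcal{F}(G)$-Pompeiu set if and only if $I=\mathbb{C}G$.
   Context: Complex-valued functions on $G$ are written as formal sums $f=\sum_{g\in G}a_g g$ with $f(g)=a_g$. $\mathcal{F}(G)$ denotes the set of all complex-valued functions on $G$, and $\mathbb{C}G$ the finitely supported ones, which form a ring under pointwise addition and convolution $f\ast h=\sum_{g\in G}\big(\sum_{x\in G}f(gx^{-1})h(x)\big)g$. For $S\subseteq G$, $\chi_S$ is the characteristic function of $S$. For a class $\mathcal{C}$ of complex-valued functions on $G$ containing $0$, a finite subset $K\subseteq G$ is a $\mathcal{C}$-Pompeiu set if $f=0$ is the only $f\in\mathcal{C}$ satisfying $\sum_{x\in gKh}f(x)=0$ for all $g,h\in G$. *)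

theory Defs
  imports "HOL-Algebra.Group" "HOL-Algebra.Generated_Groups" Complex_Main
begin

definition fun_on :: "('a, 'b) monoid_scheme \<Rightarrow> ('a \<Rightarrow> complex) set" where
  "fun_on G = {f. \<forall>x. x \<notin> carrier G \<longrightarrow> f x = 0}"

definition group_ring :: "('a, 'b) monoid_scheme \<Rightarrow> ('a \<Rightarrow> complex) set" where
  "group_ring G = {f. f \<in> fun_on G \<and> finite {x. f x \<noteq> 0}}"

definition conv :: "('a, 'b) monoid_scheme \<Rightarrow> ('a \<Rightarrow> complex) \<Rightarrow> ('a \<Rightarrow> complex) \<Rightarrow> 'a \<Rightarrow> complex" where
  "conv G f h = (\<lambda>g. if g \<in> carrier G
      then (\<Sum>x\<in>{x \<in> carrier G. h x \<noteq> 0}. f (g \<otimes>\<^bsub>G\<^esub> inv\<^bsub>G\<^esub> x) * h x) else 0)"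

definition char_fun :: "'a set \<Rightarrow> 'a \<Rightarrow> complex" where
  "char_fun S = (\<lambda>x. if x \<in> S then 1 else 0)"

definition two_sided_ideal :: "('a, 'b) monoid_scheme \<Rightarrow> ('a \<Rightarrow> complex) set \<Rightarrow> bool" where
  "two_sided_ideal G I \<longleftrightarrow> I \<subseteq> group_ring G \<and> (\<lambda>_. 0) \<in> I
     \<and> (\<forall>a\<in>I. \<forall>b\<in>I. (\<lambda>x. a x + b x) \<in> I)
     \<and> (\<forall>a\<in>I. (\<lambda>x. - a x) \<in> I)
     \<and> (\<forall>a\<in>I. \<forall>r\<in>group_ring G. conv G r a \<in> I \<and> conv G a r \<in> I)"

definition gen_ideal :: "('a, 'b) monoid_scheme \<Rightarrow> ('a \<Rightarrow> complex) \<Rightarrow> ('a \<Rightarrow> complex) set" where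
  "gen_ideal G f = \<Inter>{I. two_sided_ideal G I \<and> f \<in> I}"

definition pompeiu :: "('a, 'b) monoid_scheme \<Rightarrow> ('a \<Rightarrow> complex) set \<Rightarrow> 'a set \<Rightarrow> bool" where
  "pompeiu G C K \<longleftrightarrow> (\<forall>f\<in>C.
     (\<forall>g\<in>carrier G. \<forall>h\<in>carrier G.
        (\<Sum>x\<in>{g \<otimes>\<^bsub>G\<^esub> k \<otimes>\<^bsub>G\<^esub> h | k. k \<in> K}. f x) = 0)
     \<longrightarrow> (\<forall>x\<in>carrier G. f x = 0))"

definition finitely_generated_group :: "('a, 'b) monoid_scheme \<Rightarrow> bool" where
  "finitely_generated_group G \<longleftrightarrow>
     (\<exists>S. finite S \<and> S \<subseteq> carrier G \<and> generate G S = carrier G)"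

end

(* For a function f on G, the elements of CG whose pairing with every two-sided translate
   x \<mapsto> f (g x h) vanishes form a two-sided ideal, and f satisfies the Pompeiu condition
   for K exactly when \<chi>_K lies in it. So if \<chi>_K generates CG, this ideal contains every
   point mass \<delta>_x and f vanishes. Conversely, if the ideal I generated by \<chi>_K is proper,
   a linear functional \<phi> on CG that vanishes on I but not everywhere gives the nonzero
   function x \<mapsto> \<phi> \<delta>_x, whose sum over each gKh is \<phi> \<chi>_(gKh) = 0 since \<chi>_(gKh) =
   \<delta>_g * \<chi>_K * \<delta>_h \<in> I. *)

theory Submission
  imports Defs "HOL-Library.Function_Algebras"
begin

definition delta :: "'a \<Rightarrow> 'a \<Rightarrow> complex" where
  "delta a = (\<lambda>x. if x = a then 1 else 0)"

definition fun_scale :: "complex \<Rightarrow> ('a \<Rightarrow> complex) \<Rightarrow> 'a \<Rightarrow> complex" where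
  "fun_scale c f = (\<lambda>x. c * f x)"

definition pairing :: "('a \<Rightarrow> complex) \<Rightarrow> ('a \<Rightarrow> complex) \<Rightarrow> complex" where
  "pairing f a = (\<Sum>x\<in>{x. a x \<noteq> 0}. f x * a x)"

definition translate_annihilator :: "('a, 'b) monoid_scheme \<Rightarrow> ('a \<Rightarrow> complex) \<Rightarrow> ('a \<Rightarrow> complex) set"
  where "translate_annihilator G f = {a \<in> group_ring G.
     \<forall>g\<in>carrier G. \<forall>h\<in>carrier G. pairing (\<lambda>x. f (g \<otimes>\<^bsub>G\<^esub> x \<otimes>\<^bsub>G\<^esub> h)) a = 0}"

context vector_space
begin

lemma exists_linear_functional_separating:
  assumes U: "subspace U" and v: "v \<notin> U"
  obtains \<phi> :: "'b \<Rightarrow> 'a" where "Vector_Spaces.linear scale (*) \<phi>"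
    "\<And>u. u \<in> U \<Longrightarrow> \<phi> u = 0" "\<phi> v = 1"
proof -
  interpret field_space: vector_space "(*) :: 'a \<Rightarrow> 'a \<Rightarrow> 'a"
    by unfold_locales (auto simp: algebra_simps)
  interpret pair: vector_space_pair scale "(*) :: 'a \<Rightarrow> 'a \<Rightarrow> 'a" ..
  obtain B where B: "B \<subseteq> U" "independent B" "U \<subseteq> span B"
    using maximal_independent_subset by blast
  have "span B \<subseteq> U"
    by (rule span_minimal[OF B(1) U])
  with v have "v \<notin> span B" by blast
  with B(2) have "independent (insert v B)"
    by (rule independent_insertI[rotated])
  then obtain \<phi> where \<phi>: "Vector_Spaces.linear scale (*) \<phi>"
    and on_basis: "\<forall>x\<in>insert v B. \<phi> x = (if x = v then 1 else 0)"
    using pair.linear_independent_extend[of "insert v B" "\<lambda>x. if x = v then 1 else 0"] by blast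
  have "\<phi> u = 0" if "u \<in> U" for u
  proof (rule pair.linear_eq_0_on_span[OF \<phi>])
    show "\<And>x. x \<in> B \<Longrightarrow> \<phi> x = 0" using on_basis v B(1) by auto
    show "u \<in> span B" using B(3) that by blast
  qed
  with \<phi> on_basis that show ?thesis by auto
qed

end

global_interpretation fun_space: vector_space fun_scale
  by unfold_locales (auto simp: fun_scale_def fun_eq_iff algebra_simps)

lemma sum_fun_apply: "(\<Sum>a\<in>A. f a) x = (\<Sum>a\<in>A. f a x)"
  by (induction A rule: infinite_finite_induct) auto

lemma pairing_superset:
  "finite S \<Longrightarrow> {x. a x \<noteq> 0} \<subseteq> S \<Longrightarrow> pairing f a = (\<Sum>x\<in>S. f x * a x)"
  unfolding pairing_def by (intro sum.mono_neutral_left) auto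

lemma pairing_add:
  assumes "finite {x. a x \<noteq> 0}" "finite {x. b x \<noteq> 0}"
  shows "pairing f (\<lambda>x. a x + b x) = pairing f a + pairing f b"
proof -
  let ?S = "{x. a x \<noteq> 0} \<union> {x. b x \<noteq> 0}"
  have S: "finite ?S" using assms by simp
  have "pairing f (\<lambda>x. a x + b x) = (\<Sum>x\<in>?S. f x * (a x + b x))"
    by (rule pairing_superset[OF S]) auto
  also have "\<dots> = (\<Sum>x\<in>?S. f x * a x) + (\<Sum>x\<in>?S. f x * b x)"
    by (simp add: algebra_simps sum.distrib)
  also have "\<dots> = pairing f a + pairing f b"
    using pairing_superset[OF S, of a f] pairing_superset[OF S, of b f] by auto
  finally show ?thesis .
qed

lemma pairing_cong: "(\<And>x. a x \<noteq> 0 \<Longrightarrow> f x = f' x) \<Longrightarrow> pairing f a = pairing f' a"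
  unfolding pairing_def by (rule sum.cong) auto

lemma pairing_uminus: "pairing f (\<lambda>x. - a x) = - pairing f a"
  by (simp add: pairing_def sum_negf)

lemma pairing_swap:
  assumes "finite {x. a x \<noteq> 0}" "finite {x. b x \<noteq> 0}"
  shows "pairing (\<lambda>z. pairing (\<lambda>x. H z x) b) a = pairing (\<lambda>x. pairing (\<lambda>z. H z x) a) b"
  unfolding pairing_def sum_distrib_right
  by (subst sum.swap) (simp add: mult_ac)

lemma pairing_delta: "pairing f (delta x) = f x"
proof -
  have "{y. delta x y \<noteq> 0} = {x}" by (auto simp: delta_def)
  then show ?thesis by (simp add: pairing_def delta_def)
qed

lemma pairing_char_fun: "pairing f (char_fun K) = sum f K"
proof -
  have "{x. char_fun K x \<noteq> 0} = K" by (auto simp: char_fun_def)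
  then show ?thesis by (simp add: pairing_def char_fun_def)
qed

lemma char_fun_eq_sum_delta: "finite T \<Longrightarrow> char_fun T = (\<Sum>x\<in>T. delta x)"
  by (rule ext) (simp add: sum_fun_apply delta_def char_fun_def sum.delta')

lemma eq_sum_fun_scale_delta:
  assumes "finite {x. a x \<noteq> 0}"
  shows "a = (\<Sum>x\<in>{x. a x \<noteq> 0}. fun_scale (a x) (delta x))"
proof (rule ext)
  fix y
  have "(\<Sum>x\<in>{x. a x \<noteq> 0}. fun_scale (a x) (delta x)) y = (\<Sum>x\<in>{x. a x \<noteq> 0}. if y = x then a x else 0)"
    by (auto simp: sum_fun_apply fun_scale_def delta_def intro!: sum.cong)
  also have "\<dots> = a y" using assms by (simp add: sum.delta)
  finally show "a y = (\<Sum>x\<in>{x. a x \<noteq> 0}. fun_scale (a x) (delta x)) y" by simp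
qed

lemma conv_fun_scale_left: "conv G (fun_scale c r) b = fun_scale c (conv G r b)"
  by (simp add: conv_def fun_scale_def sum_distrib_left mult_ac fun_eq_iff)

lemma gen_ideal_least: "two_sided_ideal G J \<Longrightarrow> f \<in> J \<Longrightarrow> gen_ideal G f \<subseteq> J"
  by (auto simp: gen_ideal_def)

lemma mem_gen_ideal: "f \<in> gen_ideal G f"
  by (auto simp: gen_ideal_def)

lemma two_sided_ideal_gen_ideal:
  assumes "two_sided_ideal G (group_ring G)" "f \<in> group_ring G"
  shows "two_sided_ideal G (gen_ideal G f)"
proof -
  have "gen_ideal G f \<subseteq> group_ring G" by (rule gen_ideal_least[OF assms])
  then show ?thesis
    unfolding two_sided_ideal_def gen_ideal_def by (simp add: two_sided_ideal_def)
qed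

lemma finite_support: "a \<in> group_ring G \<Longrightarrow> finite {x. a x \<noteq> 0}"
  by (simp add: group_ring_def)

context group
begin

lemma delta_in_group_ring: "x \<in> carrier G \<Longrightarrow> delta x \<in> group_ring G"
  by (auto simp: group_ring_def fun_on_def delta_def)

lemma char_fun_in_group_ring: "finite K \<Longrightarrow> K \<subseteq> carrier G \<Longrightarrow> char_fun K \<in> group_ring G"
  by (auto simp: group_ring_def fun_on_def char_fun_def)

lemma support_conv_subset:
  assumes "a \<in> group_ring G"
  shows "{y. conv G r a y \<noteq> 0} \<subseteq> (\<lambda>(z, x). z \<otimes> x) ` ({x. r x \<noteq> 0} \<times> {x. a x \<noteq> 0})"
proof
  fix y assume "y \<in> {y. conv G r a y \<noteq> 0}"
  then have y: "y \<in> carrier G"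
    and sum: "(\<Sum>x\<in>{x \<in> carrier G. a x \<noteq> 0}. r (y \<otimes> inv x) * a x) \<noteq> 0"
    by (auto simp: conv_def split: if_splits)
  from sum.not_neutral_contains_not_neutral[OF sum]
  obtain x where x: "x \<in> carrier G" "a x \<noteq> 0" "r (y \<otimes> inv x) \<noteq> 0" by auto
  have "y = (y \<otimes> inv x) \<otimes> x" using x y by (simp add: m_assoc)
  with x y show "y \<in> (\<lambda>(z, x). z \<otimes> x) ` ({x. r x \<noteq> 0} \<times> {x. a x \<noteq> 0})" by force
qed

lemma conv_in_group_ring:
  assumes "r \<in> group_ring G" "a \<in> group_ring G"
  shows "conv G r a \<in> group_ring G"
proof -
  have "finite ((\<lambda>(z, x). z \<otimes> x) ` ({x. r x \<noteq> 0} \<times> {x. a x \<noteq> 0}))"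
    using assms by (simp add: group_ring_def)
  then have "finite {y. conv G r a y \<noteq> 0}"
    by (rule finite_subset[OF support_conv_subset[OF assms(2)]])
  then show ?thesis by (auto simp: group_ring_def fun_on_def conv_def)
qed

lemma two_sided_ideal_group_ring: "two_sided_ideal G (group_ring G)"
  unfolding two_sided_ideal_def
proof (intro conjI ballI)
  fix a b assume "a \<in> group_ring G" "b \<in> group_ring G"
  then show "(\<lambda>x. a x + b x) \<in> group_ring G"
    by (auto simp: group_ring_def fun_on_def
        intro: finite_subset[of _ "{x. a x \<noteq> 0} \<union> {x. b x \<noteq> 0}"])
qed (auto simp: conv_in_group_ring, auto simp: group_ring_def fun_on_def)

lemma conv_delta_left:
  assumes g: "g \<in> carrier G" and b: "b \<in> group_ring G"
  shows "conv G (delta g) b = (\<lambda>y. if y \<in> carrier G then b (inv g \<otimes> y) else 0)"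
proof (rule ext)
  fix y
  show "conv G (delta g) b y = (if y \<in> carrier G then b (inv g \<otimes> y) else 0)"
  proof (cases "y \<in> carrier G")
    case True
    have "y \<otimes> inv x = g \<longleftrightarrow> x = inv g \<otimes> y" if "x \<in> carrier G" for x
      using inv_solve_right'[of g y] inv_solve_left[of _ g y] True g that by blast
    then have "conv G (delta g) b y
        = (\<Sum>x\<in>{x \<in> carrier G. b x \<noteq> 0}. if x = inv g \<otimes> y then b x else 0)"
      using True by (auto simp: conv_def delta_def intro!: sum.cong)
    also have "\<dots> = b (inv g \<otimes> y)"
      using b True g by (auto simp: sum.delta' group_ring_def fun_on_def)
    finally show ?thesis using True by simp
  qed (simp add: conv_def)
qed

lemma conv_delta_right:
  assumes "h \<in> carrier G"
  shows "conv G b (delta h) = (\<lambda>y. if y \<in> carrier G then b (y \<otimes> inv h) else 0)"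
proof -
  have "{x \<in> carrier G. delta h x \<noteq> 0} = {h}" using assms by (auto simp: delta_def)
  then show ?thesis by (auto simp: conv_def delta_def fun_eq_iff)
qed

lemma conv_delta_char_fun_delta:
  assumes K: "finite K" "K \<subseteq> carrier G" and g: "g \<in> carrier G" and h: "h \<in> carrier G"
  shows "conv G (delta g) (conv G (char_fun K) (delta h)) = char_fun ((\<lambda>k. g \<otimes> k \<otimes> h) ` K)"
proof (rule ext)
  fix y
  show "conv G (delta g) (conv G (char_fun K) (delta h)) y = char_fun ((\<lambda>k. g \<otimes> k \<otimes> h) ` K) y"
  proof (cases "y \<in> carrier G")
    case True
    have "inv g \<otimes> y \<otimes> inv h \<in> K \<longleftrightarrow> y \<in> (\<lambda>k. g \<otimes> k \<otimes> h) ` K"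
    proof
      assume "inv g \<otimes> y \<otimes> inv h \<in> K"
      moreover have "y = g \<otimes> (inv g \<otimes> y \<otimes> inv h) \<otimes> h"
        using g h True by (simp add: m_assoc[symmetric]) (simp add: m_assoc)
      ultimately show "y \<in> (\<lambda>k. g \<otimes> k \<otimes> h) ` K" by blast
    next
      assume "y \<in> (\<lambda>k. g \<otimes> k \<otimes> h) ` K"
      then obtain k where k: "k \<in> K" "y = g \<otimes> k \<otimes> h" by auto
      have "k \<in> carrier G" using k K(2) by blast
      with k g h have "inv g \<otimes> y \<otimes> inv h = k"
        by (simp add: m_assoc flip: m_assoc) (simp add: m_assoc)
      with k show "inv g \<otimes> y \<otimes> inv h \<in> K" by simp
    qed
    moreover have "conv G (char_fun K) (delta h) \<in> group_ring G"
      using K h by (intro conv_in_group_ring char_fun_in_group_ring delta_in_group_ring)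
    ultimately show ?thesis using True g h
      by (simp add: conv_delta_left conv_delta_right char_fun_def m_assoc)
  next
    case False
    then have "y \<notin> (\<lambda>k. g \<otimes> k \<otimes> h) ` K" using K(2) g h by auto
    with False show ?thesis by (simp add: conv_def char_fun_def)
  qed
qed

lemma two_sided_ideal_double_translate:
  assumes J: "two_sided_ideal G J" and K: "char_fun K \<in> J" "finite K" "K \<subseteq> carrier G"
    and g: "g \<in> carrier G" and h: "h \<in> carrier G"
  shows "char_fun ((\<lambda>k. g \<otimes> k \<otimes> h) ` K) \<in> J"
proof -
  have "conv G (char_fun K) (delta h) \<in> J"
    using J K(1) delta_in_group_ring[OF h] by (auto simp: two_sided_ideal_def)
  then have "conv G (delta g) (conv G (char_fun K) (delta h)) \<in> J"
    using J delta_in_group_ring[OF g] by (auto simp: two_sided_ideal_def)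
  then show ?thesis by (simp only: conv_delta_char_fun_delta[OF K(2,3) g h])
qed

lemma subspace_two_sided_ideal:
  assumes J: "two_sided_ideal G J"
  shows "fun_space.subspace J"
proof (rule fun_space.subspaceI)
  show "0 \<in> J" "\<And>x y. x \<in> J \<Longrightarrow> y \<in> J \<Longrightarrow> x + y \<in> J"
    using J by (simp_all add: two_sided_ideal_def zero_fun_def plus_fun_def)
  fix c b assume b: "b \<in> J"
  then have "b \<in> group_ring G" using J by (auto simp: two_sided_ideal_def)
  then have "fun_scale c b = conv G (fun_scale c (delta \<one>)) b"
    by (simp add: conv_fun_scale_left conv_delta_left)
      (auto simp: fun_scale_def fun_eq_iff group_ring_def fun_on_def)
  moreover have "fun_scale c (delta \<one>) \<in> group_ring G"
    by (auto simp: group_ring_def fun_on_def fun_scale_def delta_def)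
  ultimately show "fun_scale c b \<in> J" using J b by (auto simp: two_sided_ideal_def)
qed

lemma sum_right_translate:
  assumes b: "b \<in> group_ring G" and x: "x \<in> carrier G"
    and Y: "finite Y" "Y \<subseteq> carrier G" "(\<lambda>z. z \<otimes> x) ` {z. b z \<noteq> 0} \<subseteq> Y"
  shows "(\<Sum>y\<in>Y. F y * b (y \<otimes> inv x)) = pairing (\<lambda>z. F (z \<otimes> x)) b"
proof -
  let ?S = "{z. b z \<noteq> 0}"
  have S: "\<And>z. z \<in> ?S \<Longrightarrow> z \<in> carrier G" using b by (auto simp: group_ring_def fun_on_def)
  have inj: "inj_on (\<lambda>z. z \<otimes> x) ?S"
    using x S by (intro inj_onI) simp
  have "pairing (\<lambda>z. F (z \<otimes> x)) b = (\<Sum>z\<in>?S. F (z \<otimes> x) * b (z \<otimes> x \<otimes> inv x))"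
    unfolding pairing_def using x S by (intro sum.cong refl) (simp add: m_assoc)
  also have "\<dots> = (\<Sum>y\<in>(\<lambda>z. z \<otimes> x) ` ?S. F y * b (y \<otimes> inv x))"
    by (simp add: sum.reindex[OF inj])
  also have "\<dots> = (\<Sum>y\<in>Y. F y * b (y \<otimes> inv x))"
  proof (rule sum.mono_neutral_left[OF Y(1) Y(3)], rule ballI)
    fix y assume y: "y \<in> Y - (\<lambda>z. z \<otimes> x) ` ?S"
    with Y(2) x have "y = y \<otimes> inv x \<otimes> x" by (simp add: subset_iff m_assoc)
    with y have "y \<otimes> inv x \<notin> ?S" by blast
    then show "F y * b (y \<otimes> inv x) = 0" by simp
  qed
  finally show ?thesis ..
qed

lemma pairing_conv:
  assumes r: "r \<in> group_ring G" and a: "a \<in> group_ring G"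
  shows "pairing F (conv G r a) = pairing (\<lambda>z. pairing (\<lambda>x. F (z \<otimes> x)) a) r"
proof -
  let ?Sr = "{x. r x \<noteq> 0}" and ?Sa = "{x. a x \<noteq> 0}"
  let ?Y = "(\<lambda>(z, x). z \<otimes> x) ` (?Sr \<times> ?Sa)"
  have supp: "?Sr \<subseteq> carrier G" "?Sa \<subseteq> carrier G" "finite ?Sr" "finite ?Sa"
    using r a by (auto simp: group_ring_def fun_on_def)
  have Y: "finite ?Y" "?Y \<subseteq> carrier G"
    using supp by auto
  have "pairing F (conv G r a) = (\<Sum>y\<in>?Y. F y * conv G r a y)"
    by (rule pairing_superset[OF Y(1) support_conv_subset[OF a]])
  also have "\<dots> = (\<Sum>y\<in>?Y. F y * (\<Sum>x\<in>?Sa. r (y \<otimes> inv x) * a x))"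
  proof (rule sum.cong[OF refl])
    fix y assume "y \<in> ?Y"
    with Y(2) have "y \<in> carrier G" by blast
    moreover have "{x \<in> carrier G. a x \<noteq> 0} = ?Sa" using supp(2) by blast
    ultimately show "F y * conv G r a y = F y * (\<Sum>x\<in>?Sa. r (y \<otimes> inv x) * a x)"
      by (simp add: conv_def)
  qed
  also have "\<dots> = (\<Sum>y\<in>?Y. \<Sum>x\<in>?Sa. F y * r (y \<otimes> inv x) * a x)"
    by (simp add: sum_distrib_left mult.assoc)
  also have "\<dots> = (\<Sum>x\<in>?Sa. \<Sum>y\<in>?Y. F y * r (y \<otimes> inv x) * a x)"
    by (rule sum.swap)
  also have "\<dots> = (\<Sum>x\<in>?Sa. pairing (\<lambda>z. F (z \<otimes> x)) r * a x)"
  proof (rule sum.cong[OF refl])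
    fix x assume x: "x \<in> ?Sa"
    then have "(\<lambda>z. z \<otimes> x) ` ?Sr \<subseteq> ?Y"
      by (auto intro: rev_image_eqI[where x = "(_, x)"])
    with x supp(2) have "(\<Sum>y\<in>?Y. F y * r (y \<otimes> inv x)) = pairing (\<lambda>z. F (z \<otimes> x)) r"
      by (intro sum_right_translate[OF r _ Y]) auto
    then show "(\<Sum>y\<in>?Y. F y * r (y \<otimes> inv x) * a x) = pairing (\<lambda>z. F (z \<otimes> x)) r * a x"
      by (simp only: sum_distrib_right[symmetric])
  qed
  also have "\<dots> = pairing (\<lambda>x. pairing (\<lambda>z. F (z \<otimes> x)) r) a"
    by (simp add: pairing_def)
  also have "\<dots> = pairing (\<lambda>z. pairing (\<lambda>x. F (z \<otimes> x)) a) r"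
    by (rule pairing_swap[OF supp(4,3)])
  finally show ?thesis .
qed

lemma two_sided_ideal_translate_annihilator: "two_sided_ideal G (translate_annihilator G f)"
  unfolding two_sided_ideal_def
proof (intro conjI ballI)
  show "translate_annihilator G f \<subseteq> group_ring G"
    by (auto simp: translate_annihilator_def)
  show "(\<lambda>_. 0) \<in> translate_annihilator G f"
    by (auto simp: translate_annihilator_def pairing_def group_ring_def fun_on_def)
next
  fix a b assume "a \<in> translate_annihilator G f" "b \<in> translate_annihilator G f"
  then show "(\<lambda>x. a x + b x) \<in> translate_annihilator G f"
    using two_sided_ideal_group_ring
    by (auto simp: translate_annihilator_def two_sided_ideal_def pairing_add group_ring_def)
next
  fix a assume "a \<in> translate_annihilator G f"
  then show "(\<lambda>x. - a x) \<in> translate_annihilator G f"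
    using two_sided_ideal_group_ring
    by (auto simp: translate_annihilator_def two_sided_ideal_def pairing_uminus)
next
  fix a r assume a: "a \<in> translate_annihilator G f" and r: "r \<in> group_ring G"
  then have ar: "a \<in> group_ring G"
    and ann: "\<And>g h. g \<in> carrier G \<Longrightarrow> h \<in> carrier G \<Longrightarrow> pairing (\<lambda>x. f (g \<otimes> x \<otimes> h)) a = 0"
    by (auto simp: translate_annihilator_def)
  have supp: "\<And>x. r x \<noteq> 0 \<Longrightarrow> x \<in> carrier G" "\<And>x. a x \<noteq> 0 \<Longrightarrow> x \<in> carrier G"
    using ar r by (auto simp: group_ring_def fun_on_def)
  show "conv G r a \<in> translate_annihilator G f"
    unfolding translate_annihilator_def
  proof (intro CollectI conjI ballI conv_in_group_ring r ar)
    fix g h assume g: "g \<in> carrier G" and h: "h \<in> carrier G"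
    have "pairing (\<lambda>y. f (g \<otimes> y \<otimes> h)) (conv G r a)
        = pairing (\<lambda>z. pairing (\<lambda>x. f ((g \<otimes> z) \<otimes> x \<otimes> h)) a) r"
      unfolding pairing_conv[OF r ar] using g supp
      by (intro pairing_cong) (simp add: m_assoc)
    also have "\<dots> = pairing (\<lambda>_. 0) r"
      using g h supp(1) ann by (intro pairing_cong) simp
    finally show "pairing (\<lambda>y. f (g \<otimes> y \<otimes> h)) (conv G r a) = 0"
      by (simp add: pairing_def)
  qed
  show "conv G a r \<in> translate_annihilator G f"
    unfolding translate_annihilator_def
  proof (intro CollectI conjI ballI conv_in_group_ring r ar)
    fix g h assume g: "g \<in> carrier G" and h: "h \<in> carrier G"
    have "pairing (\<lambda>y. f (g \<otimes> y \<otimes> h)) (conv G a r)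
        = pairing (\<lambda>z. pairing (\<lambda>x. f (g \<otimes> (z \<otimes> x) \<otimes> h)) r) a"
      by (rule pairing_conv[OF ar r])
    also have "\<dots> = pairing (\<lambda>x. pairing (\<lambda>z. f (g \<otimes> (z \<otimes> x) \<otimes> h)) a) r"
      by (rule pairing_swap[OF finite_support[OF ar] finite_support[OF r]])
    also have "\<dots> = pairing (\<lambda>x. pairing (\<lambda>z. f (g \<otimes> z \<otimes> (x \<otimes> h))) a) r"
      using g h supp by (intro pairing_cong) (simp add: m_assoc)
    also have "\<dots> = pairing (\<lambda>_. 0) r"
      using h supp(1) ann g by (intro pairing_cong) simp
    finally show "pairing (\<lambda>y. f (g \<otimes> y \<otimes> h)) (conv G a r) = 0"
      by (simp add: pairing_def)
  qed
qed

lemma inj_on_double_translate: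
  assumes K: "K \<subseteq> carrier G" and g: "g \<in> carrier G" and h: "h \<in> carrier G"
  shows "inj_on (\<lambda>k. g \<otimes> k \<otimes> h) K"
proof (rule inj_onI)
  fix k k' assume "k \<in> K" "k' \<in> K" and eq: "g \<otimes> k \<otimes> h = g \<otimes> k' \<otimes> h"
  with K have k: "k \<in> carrier G" "k' \<in> carrier G" by auto
  with eq g h have "g \<otimes> k = g \<otimes> k'" by simp
  then have "inv g \<otimes> (g \<otimes> k) = inv g \<otimes> (g \<otimes> k')" by simp
  with k g show "k = k'" by (simp add: m_assoc[symmetric])
qed
lemma char_fun_in_translate_annihilator_iff:
  assumes K: "finite K" "K \<subseteq> carrier G"
  shows "char_fun K \<in> translate_annihilator G f \<longleftrightarrow>
    (\<forall>g\<in>carrier G. \<forall>h\<in>carrier G. (\<Sum>x\<in>{g \<otimes> k \<otimes> h | k. k \<in> K}. f x) = 0)"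
proof -
  have "(\<Sum>x\<in>{g \<otimes> k \<otimes> h | k. k \<in> K}. f x) = pairing (\<lambda>x. f (g \<otimes> x \<otimes> h)) (char_fun K)"
    if g: "g \<in> carrier G" and h: "h \<in> carrier G" for g h
  proof -
    from inj_on_double_translate[OF K(2) g h] show ?thesis by (simp add: pairing_char_fun Setcompr_eq_image sum.reindex)
  qed
  then show ?thesis
    using char_fun_in_group_ring[OF K] by (auto simp: translate_annihilator_def)
qed

lemma delta_in_translate_annihilator_imp_zero:
  assumes "delta x \<in> translate_annihilator G f" "x \<in> carrier G"
  shows "f x = 0"
proof -
  have "\<forall>g\<in>carrier G. \<forall>h\<in>carrier G. f (g \<otimes> x \<otimes> h) = 0"
    using assms(1) by (simp add: translate_annihilator_def pairing_delta)
  then have "f (\<one> \<otimes> x \<otimes> \<one>) = 0" by blast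
  with assms(2) show ?thesis by simp
qed

lemma pompeiu_if_gen_ideal_eq_group_ring:
  assumes K: "finite K" "K \<subseteq> carrier G" and I: "gen_ideal G (char_fun K) = group_ring G"
  shows "pompeiu G (fun_on G) K"
  unfolding pompeiu_def
proof (intro ballI impI)
  fix f :: "'a \<Rightarrow> complex" and x
  assume "\<forall>g\<in>carrier G. \<forall>h\<in>carrier G. (\<Sum>x\<in>{g \<otimes> k \<otimes> h | k. k \<in> K}. f x) = 0"
  then have "char_fun K \<in> translate_annihilator G f"
    by (simp add: char_fun_in_translate_annihilator_iff[OF K])
  then have "group_ring G \<subseteq> translate_annihilator G f"
    using gen_ideal_least[OF two_sided_ideal_translate_annihilator] I by blast
  moreover assume "x \<in> carrier G"
  ultimately show "f x = 0"
    using delta_in_group_ring delta_in_translate_annihilator_imp_zero by blast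
qed

lemma gen_ideal_eq_group_ring_if_pompeiu:
  assumes K: "finite K" "K \<subseteq> carrier G" and P: "pompeiu G (fun_on G) K"
  shows "gen_ideal G (char_fun K) = group_ring G"
proof (rule ccontr)
  let ?I = "gen_ideal G (char_fun K)"
  have I: "two_sided_ideal G ?I"
    using two_sided_ideal_gen_ideal[OF two_sided_ideal_group_ring char_fun_in_group_ring[OF K]] .
  assume "?I \<noteq> group_ring G"
  moreover have "?I \<subseteq> group_ring G"
    by (rule gen_ideal_least[OF two_sided_ideal_group_ring char_fun_in_group_ring[OF K]])
  ultimately obtain a where a: "a \<in> group_ring G" "a \<notin> ?I" by blast
  obtain \<phi> where \<phi>: "Vector_Spaces.linear fun_scale (*) \<phi>"
    and \<phi>_I: "\<And>u. u \<in> ?I \<Longrightarrow> \<phi> u = 0" and \<phi>_a: "\<phi> a = 1"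
    using fun_space.exists_linear_functional_separating[OF subspace_two_sided_ideal[OF I] a(2)]
    by blast
  have \<phi>_hom: "module_hom fun_scale (*) \<phi>"
    using \<phi> by (simp add: module_hom_iff_linear)
  define F where "F x = (if x \<in> carrier G then \<phi> (delta x) else 0)" for x
  have "(\<Sum>x\<in>{g \<otimes> k \<otimes> h | k. k \<in> K}. F x) = 0"
    if g: "g \<in> carrier G" and h: "h \<in> carrier G" for g h
  proof -
    let ?T = "(\<lambda>k. g \<otimes> k \<otimes> h) ` K"
    have "(\<Sum>x\<in>{g \<otimes> k \<otimes> h | k. k \<in> K}. F x) = (\<Sum>x\<in>?T. \<phi> (delta x))"
      using K g h by (auto simp: F_def Setcompr_eq_image intro!: sum.cong)
    also have "\<dots> = \<phi> (char_fun ?T)"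
      using K by (simp add: char_fun_eq_sum_delta module_hom.sum[OF \<phi>_hom])
    also have "\<dots> = 0"
      using \<phi>_I two_sided_ideal_double_translate[OF I mem_gen_ideal K g h] by blast
    finally show ?thesis .
  qed
  moreover have "F \<in> fun_on G" by (simp add: F_def fun_on_def)
  ultimately have F_0: "\<And>x. x \<in> carrier G \<Longrightarrow> F x = 0"
    using P unfolding pompeiu_def by blast
  have supp: "{x. a x \<noteq> 0} \<subseteq> carrier G" "finite {x. a x \<noteq> 0}"
    using a(1) by (auto simp: group_ring_def fun_on_def)
  have "\<phi> a = \<phi> (\<Sum>x\<in>{x. a x \<noteq> 0}. fun_scale (a x) (delta x))"
    using eq_sum_fun_scale_delta[OF supp(2)] by (rule arg_cong)
  also have "\<dots> = (\<Sum>x\<in>{x. a x \<noteq> 0}. a x * F x)"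
    using supp(1) by (auto simp: module_hom.sum[OF \<phi>_hom] module_hom.scale[OF \<phi>_hom] F_def
        intro!: sum.cong)
  also have "\<dots> = 0"
    using supp(1) F_0 by (auto intro!: sum.neutral)
  finally show False using \<phi>_a by simp
qed

end

theorem theorem1:
  fixes G :: "('a, 'b) monoid_scheme" and K :: "'a set"
  assumes "group G" and "finitely_generated_group G"
    and "finite K" and "K \<subseteq> carrier G"
  shows "pompeiu G (fun_on G) K \<longleftrightarrow> gen_ideal G (char_fun K) = group_ring G"
  using group.pompeiu_if_gen_ideal_eq_group_ring[OF assms(1,3,4)]
    group.gen_ideal_eq_group_ring_if_pompeiu[OF assms(1,3,4)] by blast

end
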